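(* Let $r\ge3$ and let $\mathscr{G}_N$ be a uniformly random $r$-regular (simple) graph on vertex set $[N]$, $N\in2\mathbb{N}$, with law $\mathbf{P}$. Let $\ell=\ell(N)$ be integers with $\ell<\log_{r-1}(5N)$. Call a vertex $x\in[N]$ $\ell$-good if its $\ell$-neighbourhood $B_\ell(x;\mathscr{G}_N)$ is isomorphic as a rooted graph to the $\ell$-neighbourhood $B_\ell(o;\mathscr T)$ of the root $o$ in the infinite $r$-regular tree $\mathscr T$, and $\ell$-bad otherwise; let $\mathrm{bad}^N_\ell$ be the set of $\ell$-bad vertices. Then there exists a constant $K_2<\infty$ such that for all $z>0$, \[ \mathbf{P}\big(|\mathrm{bad}^N_\ell|\ge r^2(r-1)^{2\ell-2}z\big)\le\frac{K_2}{z}. \] *)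

theory Defs
  imports "HOL-Probability.Probability_Mass_Function"
begin

definition RegGraphs :: "nat \<Rightarrow> nat \<Rightarrow> nat set set set" where
  "RegGraphs r N = {E. (\<forall>e\<in>E. card e = 2 \<and> e \<subseteq> {..<N})
                        \<and> (\<forall>x<N. card {e\<in>E. x \<in> e} = r)}"

fun ball_set :: "'a set set \<Rightarrow> nat \<Rightarrow> 'a \<Rightarrow> 'a set" where
  "ball_set E 0 x = {x}"
| "ball_set E (Suc k) x = ball_set E k x \<union> {y. \<exists>z\<in>ball_set E k x. {z, y} \<in> E}"

definition rooted_iso :: "'a set \<Rightarrow> 'a set set \<Rightarrow> 'a \<Rightarrow> 'b set \<Rightarrow> 'b set set \<Rightarrow> 'b \<Rightarrow> bool" where
  "rooted_iso V1 E1 o1 V2 E2 o2 \<longleftrightarrow>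
     (\<exists>f. bij_betw f V1 V2 \<and> f o1 = o2 \<and>
          (\<forall>u\<in>V1. \<forall>v\<in>V1. {u, v} \<in> E1 \<longleftrightarrow> {f u, f v} \<in> E2))"

text \<open>The infinite r-regular tree: vertices are words, root is [], the root has children
  0..r-1 and every other vertex has children 0..r-2; edges join a word to its one-letter
  extensions.\<close>
definition tree_verts :: "nat \<Rightarrow> nat list set" where
  "tree_verts r = {xs. \<forall>i<length xs. xs ! i < (if i = 0 then r else r - 1)}"

definition tree_edges :: "nat \<Rightarrow> nat list set set" where
  "tree_edges r = {{xs, xs @ [a]} | xs a. xs @ [a] \<in> tree_verts r}"

definition good :: "nat \<Rightarrow> nat \<Rightarrow> nat set set \<Rightarrow> nat \<Rightarrow> bool" where
  "good r l E x \<longleftrightarrow>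
     rooted_iso (ball_set E l x) E x (ball_set (tree_edges r) l []) (tree_edges r) []"

definition bad :: "nat \<Rightarrow> nat \<Rightarrow> nat \<Rightarrow> nat set set \<Rightarrow> nat set" where
  "bad r N l E = {x. x < N \<and> \<not> good r l E x}"

end

theory Submission
  imports Defs
begin

text \<open>If the l-ball around x is not a tree, there are two paths from x of length at most l
  whose endpoints are joined by an edge lying on neither path; without such a configuration,
  tracing the words of the r-regular tree from x is a rooted isomorphism onto the l-ball.
  A fixed configuration, with path edges T and closing edge {u, v}, is handled by switching:
  replacing {u, v} and {a, b} by {u, a} and {v, b} shows that among the r-regular graphs
  containing T, at most a fraction 2 r / N also contain {u, v}, as long as l is small compared
  to N. Summing over x and over the configurations, and using that a vertex starts at most
  r (r - 1)^l / (r - 2) paths of length at most l, gives E |bad| <= 8 r * r^2 (r - 1)^(2 l - 2)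
  for large N; small N are trivial, and Markov's inequality concludes.\<close>

lemma distinct_hd_neq_last: "distinct p \<Longrightarrow> length p \<ge> 2 \<Longrightarrow> hd p \<noteq> last p"
  by (cases p) auto

lemma sum_card_filter_swap:
  assumes "finite A" "finite B"
  shows "(\<Sum>a\<in>A. card {b\<in>B. P a b}) = (\<Sum>b\<in>B. card {a\<in>A. P a b})"
proof -
  have "(\<Sum>a\<in>A. card {b\<in>B. P a b}) = (\<Sum>a\<in>A. \<Sum>b\<in>B. if P a b then 1 else 0)"
    using assms by (simp add: sum.If_cases Int_def)
  also have "\<dots> = (\<Sum>b\<in>B. \<Sum>a\<in>A. if P a b then 1 else 0)" by (rule sum.swap)
  also have "\<dots> = (\<Sum>b\<in>B. card {a\<in>A. P a b})"
    using assms by (simp add: sum.If_cases Int_def)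
  finally show ?thesis .
qed

lemma linear_le_exp2: "32 * n \<le> 2 ^ n + (128::nat)"
proof (cases "n \<le> 4")
  case False
  then have "n \<ge> 5" by simp
  then show ?thesis
  proof (induction n rule: nat_induct_at_least)
    case (Suc n)
    have "(2::nat) ^ 5 \<le> 2 ^ n" by (rule power_increasing) (use Suc in auto)
    then show ?case using Suc by simp
  qed simp
qed simp

lemma powi_double_minus_two:
  fixes a :: real
  assumes "a \<noteq> 0"
  shows "a powi (2 * int l - 2) = a ^ (2 * l) / a ^ 2"
proof -
  have "a powi (2 * int l - 2) = a powi (2 * int l) / a powi 2"
    using assms by (intro power_int_diff) simp
  also have "a powi (2 * int l) = a ^ (2 * l)" using power_int_of_nat[of a "2 * l"] by simp
  also have "a powi 2 = a ^ 2" using power_int_of_nat[of a 2] by simp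
  finally show ?thesis .
qed

lemma power_less_of_less_log:
  fixes b x :: real
  assumes "1 < b" "0 < x" "real n < log b x"
  shows "b ^ n < x"
  using assms by (simp add: less_log_iff powr_realpow)

lemma pmf_of_set_Markov_inequality:
  fixes f :: "'a \<Rightarrow> real"
  assumes S: "finite S" "S \<noteq> {}" and f: "\<And>x. x \<in> S \<Longrightarrow> 0 \<le> f x" and c: "0 < c"
  shows "measure_pmf.prob (pmf_of_set S) {x. c \<le> f x} \<le> (\<Sum>x\<in>S. f x) / (c * card S)"
proof -
  have "measure_pmf.prob (pmf_of_set S) {x \<in> space (measure_pmf (pmf_of_set S)). c \<le> f x}
      \<le> measure_pmf.expectation (pmf_of_set S) f / c"
    using S f c by (intro integral_Markov_inequality_measure)
      (auto simp: integrable_measure_pmf_finite AE_measure_pmf_iff)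
  then show ?thesis using S by (simp add: integral_pmf_of_set mult.commute)
qed

section \<open>Regular graphs\<close>

definition neighbours :: "'a set set \<Rightarrow> 'a \<Rightarrow> 'a set" where
  "neighbours G x = {y. {x, y} \<in> G}"

lemma RegGraphs_edge: "G \<in> RegGraphs r N \<Longrightarrow> e \<in> G \<Longrightarrow> card e = 2 \<and> e \<subseteq> {..<N}"
  by (auto simp: RegGraphs_def)

lemma RegGraphs_degree: "G \<in> RegGraphs r N \<Longrightarrow> x < N \<Longrightarrow> card {e\<in>G. x \<in> e} = r"
  by (auto simp: RegGraphs_def)

lemma finite_RegGraphs: "finite (RegGraphs r N)"
  by (rule finite_subset[of _ "Pow (Pow {..<N})"]) (auto simp: RegGraphs_def)

lemma RegGraphs_finite_edges: "G \<in> RegGraphs r N \<Longrightarrow> finite G"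
  by (rule finite_subset[of _ "Pow {..<N}"]) (auto simp: RegGraphs_def)

lemma neighbours_lessThan: "G \<in> RegGraphs r N \<Longrightarrow> y \<in> neighbours G x \<Longrightarrow> x < N \<and> y < N"
  using RegGraphs_edge[of G r N "{x, y}"] by (auto simp: neighbours_def)

lemma finite_neighbours: "G \<in> RegGraphs r N \<Longrightarrow> finite (neighbours G x)"
  by (rule finite_subset[of _ "{..<N}"]) (auto dest: neighbours_lessThan)

lemma card_neighbours:
  assumes G: "G \<in> RegGraphs r N" and x: "x < N"
  shows "card (neighbours G x) = r"
proof -
  have "bij_betw (\<lambda>y. {x, y}) (neighbours G x) {e\<in>G. x \<in> e}"
  proof (rule bij_betwI')
    show "\<And>a b. a \<in> neighbours G x \<Longrightarrow> b \<in> neighbours G x \<Longrightarrow> ({x, a} = {x, b}) = (a = b)"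
      by (auto simp: doubleton_eq_iff)
    show "\<And>a. a \<in> neighbours G x \<Longrightarrow> {x, a} \<in> {e \<in> G. x \<in> e}"
      by (auto simp: neighbours_def)
    fix e assume e: "e \<in> {e \<in> G. x \<in> e}"
    then obtain a b where ab: "e = {a, b}" "a \<noteq> b"
      using RegGraphs_edge[OF G, of e] by (auto simp: card_2_iff)
    with e show "\<exists>y\<in>neighbours G x. e = {x, y}"
      by (auto simp: neighbours_def insert_commute)
  qed
  then show ?thesis using RegGraphs_degree[OF G x] by (simp add: bij_betw_same_card)
qed

lemma card_neighbours_le: "G \<in> RegGraphs r N \<Longrightarrow> card (neighbours G x) \<le> r"
proof (cases "x < N")
  case False
  assume "G \<in> RegGraphs r N"
  then have "neighbours G x = {}" using False by (auto dest: neighbours_lessThan)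
  then show ?thesis by simp
qed (simp add: card_neighbours)

lemma card_Sigma_neighbours_le:
  assumes G: "G \<in> RegGraphs r N" and A: "finite A"
  shows "card (Sigma A (neighbours G)) \<le> card A * r"
proof -
  have "card (Sigma A (neighbours G)) = (\<Sum>a\<in>A. card (neighbours G a))"
    by (simp add: finite_neighbours[OF G] A)
  also have "\<dots> \<le> (\<Sum>a\<in>A. r)" by (rule sum_mono) (rule card_neighbours_le[OF G])
  finally show ?thesis by simp
qed

lemma card_arcs:
  assumes G: "G \<in> RegGraphs r N"
  shows "card (Sigma {..<N} (neighbours G)) = r * N"
proof -
  have "card (Sigma {..<N} (neighbours G)) = (\<Sum>a<N. card (neighbours G a))"
    by (simp add: finite_neighbours[OF G])
  also have "\<dots> = (\<Sum>a<N. r)" by (rule sum.cong) (simp_all add: card_neighbours[OF G])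
  finally show ?thesis by simp
qed

section \<open>Switching\<close>

lemma card_incident_replace:
  assumes "finite G" "X \<subseteq> G" "Y \<inter> G = {}" "finite Y"
    and "card {e\<in>X. y \<in> e} = card {e\<in>Y. y \<in> e}"
  shows "card {e\<in>(G - X) \<union> Y. y \<in> e} = card {e\<in>G. y \<in> e}"
proof -
  have eq: "{e\<in>(G - X) \<union> Y. y \<in> e} = ({e\<in>G. y \<in> e} - {e\<in>X. y \<in> e}) \<union> {e\<in>Y. y \<in> e}"
    by auto
  have fin: "finite {e\<in>G. y \<in> e}" "finite {e\<in>Y. y \<in> e}" using assms by auto
  have sub: "{e\<in>X. y \<in> e} \<subseteq> {e\<in>G. y \<in> e}" using assms by auto
  have "card {e\<in>(G - X) \<union> Y. y \<in> e} = card ({e\<in>G. y \<in> e} - {e\<in>X. y \<in> e}) + card {e\<in>Y. y \<in> e}"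
    unfolding eq by (rule card_Un_disjoint) (use fin assms in auto)
  also have "card ({e\<in>G. y \<in> e} - {e\<in>X. y \<in> e}) = card {e\<in>G. y \<in> e} - card {e\<in>X. y \<in> e}"
    by (rule card_Diff_subset) (use fin sub in \<open>auto intro: finite_subset\<close>)
  finally show ?thesis using card_mono[OF fin(1) sub] assms(5) by simp
qed

lemma card_incident_doubleton:
  assumes "e \<noteq> f"
  shows "card {g\<in>{e, f}. y \<in> g} = (if y \<in> e then 1 else 0) + (if y \<in> f then 1 else (0::nat))"
proof -
  have "{g\<in>{e, f}. y \<in> g} = (if y \<in> e then {e} else {}) \<union> (if y \<in> f then {f} else {})" by auto
  then show ?thesis using assms by auto
qed

definition switch :: "'a set set \<Rightarrow> 'a \<Rightarrow> 'a \<Rightarrow> 'a \<Rightarrow> 'a \<Rightarrow> 'a set set" where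
  "switch G u v a b = (G - {{u, v}, {a, b}}) \<union> {{u, a}, {v, b}}"

lemma switch_RegGraphs:
  assumes G: "G \<in> RegGraphs r N" and uv: "{u, v} \<in> G" and ab: "{a, b} \<in> G"
    and ua: "{u, a} \<notin> G" and vb: "{v, b} \<notin> G"
    and d: "u \<noteq> v" "a \<noteq> b" "a \<notin> {u, v}" "b \<notin> {u, v}"
  shows "switch G u v a b \<in> RegGraphs r N"
proof -
  have lt: "u < N" "v < N" "a < N" "b < N" using RegGraphs_edge[OF G uv] RegGraphs_edge[OF G ab] by auto
  have "\<forall>e\<in>switch G u v a b. card e = 2 \<and> e \<subseteq> {..<N}"
    using G d lt unfolding switch_def by (auto simp: RegGraphs_def)
  moreover have "card {e\<in>switch G u v a b. y \<in> e} = card {e\<in>G. y \<in> e}" for y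
    unfolding switch_def
  proof (rule card_incident_replace)
    show "finite G" using RegGraphs_finite_edges[OF G] .
    show "{{u, v}, {a, b}} \<subseteq> G" using uv ab by simp
    show "{{u, a}, {v, b}} \<inter> G = {}" using ua vb by simp
    show "finite {{u, a}, {v, b}}" by simp
    have n1: "{u, v} \<noteq> {a, b}" and n2: "{u, a} \<noteq> {v, b}" using d by (auto simp: doubleton_eq_iff)
    show "card {e\<in>{{u, v}, {a, b}}. y \<in> e} = card {e\<in>{{u, a}, {v, b}}. y \<in> e}"
      unfolding card_incident_doubleton[OF n1] card_incident_doubleton[OF n2] using d by auto
  qed
  ultimately show ?thesis using G by (simp add: RegGraphs_def)
qed

lemma switch_inverse:
  assumes "{u, v} \<in> G" "{a, b} \<in> G" "{u, a} \<notin> G" "{v, b} \<notin> G"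
  shows "insert {u, v} (insert {a, b} (switch G u v a b - {{u, a}, {v, b}})) = G"
  using assms by (auto simp: switch_def)

text \<open>The conditions keep the edges of T, and make the switch below create neither a loop nor a
  multiple edge.\<close>

definition switch_pairs :: "'a set set \<Rightarrow> 'a set set \<Rightarrow> 'a \<Rightarrow> 'a \<Rightarrow> ('a \<times> 'a) set" where
  "switch_pairs G T u v =
     {(a, b). {a, b} \<in> G - T \<and> a \<notin> {u, v} \<and> b \<notin> {u, v} \<and> {u, a} \<notin> G \<and> {v, b} \<notin> G}"

lemma finite_switch_pairs:
  assumes G: "G \<in> RegGraphs r N"
  shows "finite (switch_pairs G T u v)"
proof (rule finite_subset)
  show "switch_pairs G T u v \<subseteq> Sigma {..<N} (neighbours G)"
    using RegGraphs_edge[OF G] by (auto simp: switch_pairs_def neighbours_def)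
qed (simp add: finite_neighbours[OF G])

lemma arcs_subset_switch_pairs:
  "Sigma A (neighbours G) \<subseteq> switch_pairs G T u v \<union> (\<Union>t\<in>T. t \<times> t)
     \<union> (Sigma {u, v} (neighbours G) \<union> prod.swap ` Sigma {u, v} (neighbours G))
     \<union> (Sigma (neighbours G u) (neighbours G) \<union> prod.swap ` Sigma (neighbours G v) (neighbours G))"
    (is "_ \<subseteq> ?sp \<union> ?in_T \<union> ?at_uv \<union> ?near_uv")
proof (rule subrelI)
  fix a b let ?nb = "neighbours G"
  assume "(a, b) \<in> Sigma A ?nb"
  then have ab: "b \<in> ?nb a" by simp
  have swap: "(a, b) \<in> prod.swap ` Sigma B ?nb" if "b \<in> B" for B
    using that ab by (intro rev_image_eqI[of "(b, a)"]) (simp_all add: neighbours_def insert_commute)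
  have "{a, b} \<in> G" using ab by (simp add: neighbours_def)
  then consider "(a, b) \<in> ?sp" | "{a, b} \<in> T" | "a \<in> {u, v}" | "b \<in> {u, v}"
    | "a \<in> ?nb u" | "b \<in> ?nb v"
    by (auto simp: switch_pairs_def neighbours_def)
  then show "(a, b) \<in> ?sp \<union> ?in_T \<union> ?at_uv \<union> ?near_uv"
  proof cases
    case 2 then have "(a, b) \<in> ?in_T" by auto
    then show ?thesis by simp
  next
    case 3 then have "(a, b) \<in> ?at_uv" using ab by simp
    then show ?thesis by simp
  next
    case 4 then have "(a, b) \<in> prod.swap ` Sigma {u, v} ?nb" by (rule swap)
    then show ?thesis by blast
  next
    case 5 then have "(a, b) \<in> ?near_uv" using ab by simp
    then show ?thesis by simp
  next
    case 6 then have "(a, b) \<in> prod.swap ` Sigma (?nb v) ?nb" by (rule swap)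
    then show ?thesis by blast
  qed simp
qed

lemma card_Sigma_Un_swap_le:
  assumes G: "G \<in> RegGraphs r N" and A: "finite A" and B: "finite B"
  shows "card (Sigma A (neighbours G) \<union> prod.swap ` Sigma B (neighbours G)) \<le> (card A + card B) * r"
proof -
  have "card (prod.swap ` Sigma B (neighbours G)) \<le> card (Sigma B (neighbours G))"
    by (rule card_image_le) (simp add: B finite_neighbours[OF G])
  then show ?thesis
    using card_Un_le[of "Sigma A (neighbours G)" "prod.swap ` Sigma B (neighbours G)"]
      card_Sigma_neighbours_le[OF G A] card_Sigma_neighbours_le[OF G B]
    by (simp add: add_mult_distrib)
qed

lemma card_switch_pairs_ge:
  assumes G: "G \<in> RegGraphs r N" and T: "finite T" "\<forall>t\<in>T. card t = 2"
  shows "r * N - (4 * card T + 4 * r + 2 * r^2) \<le> card (switch_pairs G T u v)"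
proof -
  let ?nb = "neighbours G"
  define in_T where "in_T = (\<Union>t\<in>T. t \<times> t)"
  define at_uv where "at_uv = Sigma {u, v} ?nb \<union> prod.swap ` Sigma {u, v} ?nb"
  define near_uv where "near_uv = Sigma (?nb u) ?nb \<union> prod.swap ` Sigma (?nb v) ?nb"
  have fin: "finite (switch_pairs G T u v)" "finite in_T" "finite at_uv" "finite near_uv"
    using T finite_neighbours[OF G] finite_switch_pairs[OF G]
    by (auto simp: in_T_def at_uv_def near_uv_def card_ge_0_finite)
  have "r * N \<le> card (switch_pairs G T u v \<union> in_T \<union> at_uv \<union> near_uv)"
    unfolding card_arcs[OF G, symmetric] in_T_def at_uv_def near_uv_def
    by (rule card_mono[OF _ arcs_subset_switch_pairs]) (use fin in \<open>simp add: in_T_def at_uv_def near_uv_def\<close>)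
  also have "\<dots> \<le> card (switch_pairs G T u v) + card in_T + card at_uv + card near_uv"
    using card_Un_le[of "switch_pairs G T u v \<union> in_T \<union> at_uv" near_uv]
      card_Un_le[of "switch_pairs G T u v \<union> in_T" at_uv] card_Un_le[of "switch_pairs G T u v" in_T]
    by linarith
  finally have "r * N \<le> card (switch_pairs G T u v) + card in_T + card at_uv + card near_uv" .
  moreover have "card in_T \<le> 4 * card T"
    using card_UN_le[OF T(1), of "\<lambda>t. t \<times> t"] T(2) by (simp add: in_T_def card_cartesian_product)
  moreover have "card at_uv \<le> 4 * r"
  proof -
    have fin_uv: "finite {u, v}" by simp
    have "(card {u, v} + card {u, v}) * r \<le> 4 * r" by (rule mult_le_mono1) (cases "u = v"; simp)
    then show ?thesis
      using card_Sigma_Un_swap_le[OF G fin_uv fin_uv] unfolding at_uv_def by linarith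
  qed
  moreover have "card near_uv \<le> 2 * r^2"
  proof -
    have "(card (?nb u) + card (?nb v)) * r \<le> 2 * r^2"
      using card_neighbours_le[OF G, of u] card_neighbours_le[OF G, of v]
      by (simp add: power2_eq_square mult_le_mono1 flip: mult_2)
    then show ?thesis
      using card_Sigma_Un_swap_le[OF G finite_neighbours[OF G] finite_neighbours[OF G], of u v]
      unfolding near_uv_def by linarith
  qed
  ultimately show ?thesis by arith
qed

lemma switch_of_switch_pair:
  assumes G: "G \<in> RegGraphs r N" "T \<subseteq> G" "{u, v} \<in> G" and uv: "u \<noteq> v" "{u, v} \<notin> T"
    and ab: "(a, b) \<in> switch_pairs G T u v"
  shows "switch G u v a b \<in> RegGraphs r N" "T \<subseteq> switch G u v a b"
    "a \<in> neighbours (switch G u v a b) u" "b \<in> neighbours (switch G u v a b) v"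
proof -
  have ab': "{a, b} \<in> G" "{a, b} \<notin> T" "a \<notin> {u, v}" "b \<notin> {u, v}" "{u, a} \<notin> G" "{v, b} \<notin> G"
    using ab by (auto simp: switch_pairs_def)
  have "a \<noteq> b" using RegGraphs_edge[OF G(1) ab'(1)] by auto
  then show "switch G u v a b \<in> RegGraphs r N" using G uv ab' by (intro switch_RegGraphs) auto
  show "T \<subseteq> switch G u v a b" using G uv ab' by (auto simp: switch_def)
  show "a \<in> neighbours (switch G u v a b) u" "b \<in> neighbours (switch G u v a b) v"
    by (simp_all add: neighbours_def switch_def)
qed

text \<open>The map (G, (a, b)) |-> (switch G u v a b, (a, b)) is injective, and its image consists of
  graphs containing T together with a neighbour a of u and a neighbour b of v: at most r^2 pairs
  per graph.\<close>

lemma card_Sigma_switch_pairs_le: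
  assumes uv: "u \<noteq> v" "{u, v} \<notin> T"
  shows "card (Sigma {G\<in>RegGraphs r N. T \<subseteq> G \<and> {u, v} \<in> G} (\<lambda>G. switch_pairs G T u v))
    \<le> r^2 * card {G\<in>RegGraphs r N. T \<subseteq> G}"
proof -
  define A where "A = {G\<in>RegGraphs r N. T \<subseteq> G \<and> {u, v} \<in> G}"
  define B where "B = {G\<in>RegGraphs r N. T \<subseteq> G}"
  define sw where "sw = (\<lambda>(G, (a, b)). (switch G u v a b, (a, b)))"
  define unsw where "unsw = (\<lambda>(G', (a, b)). (insert {u, v} (insert {a, b} (G' - {{u, a}, {v, b}})), (a, b)))"
  let ?pairs = "Sigma A (\<lambda>G. switch_pairs G T u v)"
  have fin: "finite B" using finite_RegGraphs by (simp add: B_def)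
  have "card ?pairs = card (sw ` ?pairs)"
  proof (rule card_image[symmetric], rule inj_on_inverseI)
    fix p assume "p \<in> ?pairs"
    then obtain G a b where "p = (G, (a, b))" "{u, v} \<in> G" "{a, b} \<in> G" "{u, a} \<notin> G" "{v, b} \<notin> G"
      by (auto simp: A_def switch_pairs_def)
    then show "unsw (sw p) = p" by (simp add: sw_def unsw_def switch_inverse)
  qed
  also have "\<dots> \<le> card (Sigma B (\<lambda>G'. neighbours G' u \<times> neighbours G' v))"
  proof (rule card_mono)
    show "finite (Sigma B (\<lambda>G'. neighbours G' u \<times> neighbours G' v))"
      using fin finite_neighbours by (force simp: B_def)
    show "sw ` ?pairs \<subseteq> Sigma B (\<lambda>G'. neighbours G' u \<times> neighbours G' v)"
    proof
      fix y assume "y \<in> sw ` ?pairs"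
      then obtain G a b where y: "y = (switch G u v a b, (a, b))"
        and G: "G \<in> A" and ab: "(a, b) \<in> switch_pairs G T u v"
        by (auto simp: sw_def)
      have "G \<in> RegGraphs r N" "T \<subseteq> G" "{u, v} \<in> G" using G by (simp_all add: A_def)
      from switch_of_switch_pair[OF this uv ab]
      show "y \<in> Sigma B (\<lambda>G'. neighbours G' u \<times> neighbours G' v)" by (simp add: y B_def)
    qed
  qed
  also have "\<dots> = (\<Sum>G'\<in>B. card (neighbours G' u) * card (neighbours G' v))"
    using fin finite_neighbours by (subst card_SigmaI) (auto simp: B_def card_cartesian_product)
  also have "\<dots> \<le> (\<Sum>G'\<in>B. r * r)"
    by (rule sum_mono, rule mult_le_mono) (auto intro: card_neighbours_le simp: B_def)
  finally show ?thesis by (simp add: A_def B_def power2_eq_square mult.commute)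
qed

lemma switching_count:
  assumes T: "finite T" "\<forall>t\<in>T. card t = 2" and uv: "u \<noteq> v" "{u, v} \<notin> T"
  shows "card {G\<in>RegGraphs r N. T \<subseteq> G \<and> {u, v} \<in> G} * (r * N - (4 * card T + 4 * r + 2 * r^2))
     \<le> r^2 * card {G\<in>RegGraphs r N. T \<subseteq> G}"
proof -
  define A where "A = {G\<in>RegGraphs r N. T \<subseteq> G \<and> {u, v} \<in> G}"
  have "card A * (r * N - (4 * card T + 4 * r + 2 * r^2))
      = (\<Sum>G\<in>A. r * N - (4 * card T + 4 * r + 2 * r^2))" by simp
  also have "\<dots> \<le> (\<Sum>G\<in>A. card (switch_pairs G T u v))"
    by (intro sum_mono card_switch_pairs_ge[OF _ T]) (simp add: A_def)
  also have "\<dots> = card (Sigma A (\<lambda>G. switch_pairs G T u v))"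
    using finite_RegGraphs finite_switch_pairs by (intro card_SigmaI[symmetric]) (auto simp: A_def)
  also have "\<dots> \<le> r^2 * card {G\<in>RegGraphs r N. T \<subseteq> G}"
    unfolding A_def by (rule card_Sigma_switch_pairs_le[OF uv])
  finally show ?thesis by (simp add: A_def)
qed

section \<open>Short cycles and the exploration of the tree\<close>

definition path_edges :: "'a list \<Rightarrow> 'a set set" where
  "path_edges p = {{p ! i, p ! Suc i} | i. Suc i < length p}"

definition is_path :: "'a set set \<Rightarrow> 'a \<Rightarrow> 'a list \<Rightarrow> bool" where
  "is_path G x p \<longleftrightarrow> p \<noteq> [] \<and> hd p = x \<and> distinct p \<and> path_edges p \<subseteq> G"

text \<open>Together with the closing edge, the two paths contain a cycle meeting the l-ball of x;
  this is the only obstruction to x being good.\<close>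

definition short_cycle_near :: "'a set set \<Rightarrow> nat \<Rightarrow> 'a \<Rightarrow> bool" where
  "short_cycle_near G l x \<longleftrightarrow> (\<exists>p q. is_path G x p \<and> is_path G x q
      \<and> length p \<le> Suc l \<and> length q \<le> Suc l
      \<and> {last p, last q} \<in> G \<and> {last p, last q} \<notin> path_edges p \<union> path_edges q)"

lemma short_cycle_nearI:
  "is_path G x p \<Longrightarrow> is_path G x q \<Longrightarrow> length p \<le> Suc l \<Longrightarrow> length q \<le> Suc l
    \<Longrightarrow> {last p, last q} \<in> G \<Longrightarrow> {last p, last q} \<notin> path_edges p \<union> path_edges q
    \<Longrightarrow> short_cycle_near G l x"
  unfolding short_cycle_near_def by (intro exI[of _ p] exI[of _ q]) simp

lemma path_edges_single [simp]: "path_edges [x] = {}"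
  by (auto simp: path_edges_def)

lemma path_edges_snoc: "p \<noteq> [] \<Longrightarrow> path_edges (p @ [y]) = path_edges p \<union> {{last p, y}}"
proof
  assume p: "p \<noteq> []"
  show "path_edges (p @ [y]) \<subseteq> path_edges p \<union> {{last p, y}}"
  proof
    fix e assume "e \<in> path_edges (p @ [y])"
    then obtain i where i: "e = {(p @ [y]) ! i, (p @ [y]) ! Suc i}" "Suc i < Suc (length p)"
      by (auto simp: path_edges_def)
    show "e \<in> path_edges p \<union> {{last p, y}}"
    proof (cases "Suc i < length p")
      case True then show ?thesis using i by (auto simp: path_edges_def nth_append)
    next
      case False then have "i = length p - 1" using i by auto
      then show ?thesis using i p by (auto simp: nth_append last_conv_nth)
    qed
  qed
  show "path_edges p \<union> {{last p, y}} \<subseteq> path_edges (p @ [y])"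
  proof
    fix e assume "e \<in> path_edges p \<union> {{last p, y}}"
    then consider "e \<in> path_edges p" | "e = {last p, y}" by auto
    then show "e \<in> path_edges (p @ [y])"
    proof cases
      case 1 then obtain i where "e = {p ! i, p ! Suc i}" "Suc i < length p"
        by (auto simp: path_edges_def)
      then show ?thesis unfolding path_edges_def
        by (intro CollectI exI[of _ i]) (auto simp: nth_append)
    next
      case 2 then show ?thesis unfolding path_edges_def using p
        by (intro CollectI exI[of _ "length p - 1"]) (auto simp: nth_append last_conv_nth)
    qed
  qed
qed

lemma path_edges_take: "path_edges (take k p) \<subseteq> path_edges p"
  by (auto simp: path_edges_def)

lemma path_edges_subset_set: "e \<in> path_edges p \<Longrightarrow> e \<subseteq> set p"
  by (auto simp: path_edges_def)

lemma finite_path_edges: "finite (path_edges p)"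
  and card_path_edges_le: "card (path_edges p) \<le> length p - 1"
proof -
  have e: "path_edges p = (\<lambda>i. {p ! i, p ! Suc i}) ` {..<length p - 1}"
    by (auto simp: path_edges_def)
  show "finite (path_edges p)" unfolding e by simp
  show "card (path_edges p) \<le> length p - 1"
    unfolding e using card_image_le[of "{..<length p - 1}"] by simp
qed

lemma card_path_edge: "distinct p \<Longrightarrow> e \<in> path_edges p \<Longrightarrow> card e = 2"
  by (auto simp: path_edges_def nth_eq_iff_index_eq)

lemma path_edges_last:
  assumes "distinct p" "{last p, y} \<in> path_edges p"
  shows "length p \<ge> 2 \<and> y = p ! (length p - 2)"
proof -
  obtain i where i: "{last p, y} = {p ! i, p ! Suc i}" "Suc i < length p"
    using assms by (auto simp: path_edges_def)
  then have "p \<noteq> []" by auto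
  then have lp: "last p = p ! (length p - 1)" by (simp add: last_conv_nth)
  show ?thesis
  proof (cases "last p = p ! i")
    case True
    then have "i = length p - 1" using lp assms(1) i by (simp add: nth_eq_iff_index_eq)
    then show ?thesis using i by simp
  next
    case False
    then have "last p = p ! Suc i" "y = p ! i" using i by (auto simp: doubleton_eq_iff)
    then have "i = length p - 2" using lp assms(1) i by (simp add: nth_eq_iff_index_eq)
    then show ?thesis using i \<open>y = p ! i\<close> by simp
  qed
qed

lemma is_path_take: "is_path G x p \<Longrightarrow> is_path G x (take (Suc j) p)"
  unfolding is_path_def using path_edges_take[of "Suc j" p] by (auto simp: hd_take)

lemma is_path_snocD:
  assumes "is_path G x (p @ [y])" "p \<noteq> []"
  shows "is_path G x p" "y \<in> neighbours G (last p)" "y \<notin> set p"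
  using assms path_edges_snoc[OF assms(2), of y] by (auto simp: is_path_def neighbours_def)

lemma is_path_lessThan:
  assumes G: "G \<in> RegGraphs r N" and x: "x < N" and p: "is_path G x p"
  shows "set p \<subseteq> {..<N}"
proof
  fix y assume "y \<in> set p"
  then obtain i where i: "i < length p" "y = p ! i" by (auto simp: in_set_conv_nth)
  show "y \<in> {..<N}"
  proof (cases i)
    case 0 then show ?thesis using p i x by (auto simp: is_path_def hd_conv_nth)
  next
    case (Suc j)
    then have "{p ! j, p ! i} \<in> G" using p i unfolding is_path_def path_edges_def by auto
    then show ?thesis using RegGraphs_edge[OF G] i by auto
  qed
qed

lemma tree_verts_Nil: "[] \<in> tree_verts r"
  by (simp add: tree_verts_def)

lemma tree_verts_snoc:
  "w @ [a] \<in> tree_verts r \<longleftrightarrow> w \<in> tree_verts r \<and> a < (if w = [] then r else r - 1)"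
  unfolding tree_verts_def by (auto simp: nth_append less_Suc_eq)

lemma tree_verts_butlast: "w \<in> tree_verts r \<Longrightarrow> butlast w \<in> tree_verts r"
  by (cases w rule: rev_cases) (auto simp: tree_verts_snoc)

lemma tree_edges_iff:
  "{s, t} \<in> tree_edges r \<longleftrightarrow>
     (\<exists>a. t = s @ [a] \<and> t \<in> tree_verts r) \<or> (\<exists>a. s = t @ [a] \<and> s \<in> tree_verts r)"
  unfolding tree_edges_def by (auto simp: doubleton_eq_iff)

lemma ball_set_tree: "ball_set (tree_edges r) k [] = {w \<in> tree_verts r. length w \<le> k}"
proof (induction k)
  case 0 then show ?case by (auto simp: tree_verts_Nil)
next
  case (Suc k)
  show ?case
  proof
    show "ball_set (tree_edges r) (Suc k) [] \<subseteq> {w \<in> tree_verts r. length w \<le> Suc k}"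
    proof
      fix y assume "y \<in> ball_set (tree_edges r) (Suc k) []"
      then consider "y \<in> ball_set (tree_edges r) k []"
        | z where "z \<in> ball_set (tree_edges r) k []" "{z, y} \<in> tree_edges r"
        by auto
      then show "y \<in> {w \<in> tree_verts r. length w \<le> Suc k}"
      proof cases
        case 1 then show ?thesis using Suc by auto
      next
        case 2
        then have z: "z \<in> tree_verts r" "length z \<le> k" using Suc by auto
        from 2(2) consider a where "y = z @ [a]" "y \<in> tree_verts r"
          | a where "z = y @ [a]" "z \<in> tree_verts r"
          unfolding tree_edges_iff by blast
        then show ?thesis by cases (use z in \<open>auto simp: tree_verts_snoc\<close>)
      qed
    qed
    show "{w \<in> tree_verts r. length w \<le> Suc k} \<subseteq> ball_set (tree_edges r) (Suc k) []"
    proof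
      fix w assume w: "w \<in> {w \<in> tree_verts r. length w \<le> Suc k}"
      show "w \<in> ball_set (tree_edges r) (Suc k) []"
      proof (cases "length w \<le> k")
        case True then show ?thesis using Suc w by auto
      next
        case False
        then obtain w' a where wa: "w = w' @ [a]" by (cases w rule: rev_cases) auto
        then have "w' \<in> ball_set (tree_edges r) k []" using Suc w False by (auto simp: tree_verts_snoc)
        moreover have "{w', w} \<in> tree_edges r" unfolding tree_edges_iff using wa w by auto
        ultimately show ?thesis by auto
      qed
    qed
  qed
qed

lemma ball_set_mono: "k \<le> k' \<Longrightarrow> ball_set E k x \<subseteq> ball_set E k' x"
  by (induction k' rule: dec_induct) auto

text \<open>A word a_1 ... a_k of the tree is traced in G from x by stepping, at the i-th step, to the
  a_i-th neighbour (in increasing order) of the current vertex other than the previous one.\<close>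

definition children :: "nat set set \<Rightarrow> nat list \<Rightarrow> nat list" where
  "children G p = (if length p = 1 then sorted_list_of_set (neighbours G (last p))
     else filter (\<lambda>z. z \<noteq> p ! (length p - 2)) (sorted_list_of_set (neighbours G (last p))))"

definition explore_path :: "nat set set \<Rightarrow> nat \<Rightarrow> nat list \<Rightarrow> nat list" where
  "explore_path G x w = foldl (\<lambda>p a. p @ [children G p ! a]) [x] w"

definition explore :: "nat set set \<Rightarrow> nat \<Rightarrow> nat list \<Rightarrow> nat" where
  "explore G x w = last (explore_path G x w)"

lemma explore_path_Nil [simp]: "explore_path G x [] = [x]"
  by (simp add: explore_path_def)

lemma explore_path_snoc: "explore_path G x (w @ [a]) = explore_path G x w @ [children G (explore_path G x w) ! a]"
  by (simp add: explore_path_def)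

lemma length_explore_path [simp]: "length (explore_path G x w) = Suc (length w)"
  by (induction w rule: rev_induct) (auto simp: explore_path_snoc)

lemma explore_path_not_Nil [simp]: "explore_path G x w \<noteq> []"
  using length_explore_path[of G x w] by (metis Zero_not_Suc list.size(3))

lemma hd_explore_path: "hd (explore_path G x w) = x"
  by (induction w rule: rev_induct) (auto simp: explore_path_snoc hd_append)

lemma explore_Nil [simp]: "explore G x [] = x"
  by (simp add: explore_def)

lemma explore_snoc: "explore G x (w @ [a]) = children G (explore_path G x w) ! a"
  by (simp add: explore_def explore_path_snoc)

lemma explore_path_butlast:
  "w \<noteq> [] \<Longrightarrow> explore_path G x w = explore_path G x (butlast w) @ [explore G x w]"
  by (cases w rule: rev_cases) (auto simp: explore_path_snoc explore_def)

lemma explore_path_penultimate: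
  "w \<noteq> [] \<Longrightarrow> explore_path G x w ! (length w - 1) = explore G x (butlast w)"
  by (cases w rule: rev_cases) (auto simp: explore_path_snoc explore_def nth_append last_conv_nth)

lemma distinct_children: "distinct (children G p)"
  by (simp add: children_def)

lemma set_children:
  "finite (neighbours G (last p)) \<Longrightarrow>
    set (children G p) = neighbours G (last p) - (if length p = 1 then {} else {p ! (length p - 2)})"
  by (auto simp: children_def)

lemma length_children:
  assumes G: "G \<in> RegGraphs r N" and x: "x < N" and p: "is_path G x p"
  shows "length (children G p) = (if length p = 1 then r else r - 1)"
proof -
  have pne: "p \<noteq> []" using p by (simp add: is_path_def)
  have "last p < N" using is_path_lessThan[OF G x p] pne by (meson last_in_set lessThan_iff subsetD)
  then have card: "card (neighbours G (last p)) = r" by (rule card_neighbours[OF G])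
  have fin: "finite (neighbours G (last p))" using finite_neighbours[OF G] .
  show ?thesis
  proof (cases "length p = 1")
    case True then show ?thesis using card fin by (simp add: children_def)
  next
    case False
    then have l2: "length p \<ge> 2" using pne by (cases p) (auto simp: Suc_le_eq)
    then have "{p ! (length p - 2), p ! Suc (length p - 2)} \<in> path_edges p"
      unfolding path_edges_def by (intro CollectI exI[of _ "length p - 2"]) auto
    moreover have "Suc (length p - 2) = length p - 1" using l2 by simp
    ultimately have "{last p, p ! (length p - 2)} \<in> G" using p pne
      by (auto simp: is_path_def last_conv_nth insert_commute)
    then have mem: "p ! (length p - 2) \<in> neighbours G (last p)" by (simp add: neighbours_def)
    have "length (children G p) = card (neighbours G (last p) - {p ! (length p - 2)})"
      using False fin distinct_card[OF distinct_children, of G p, symmetric] set_children[OF fin]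
      by simp
    also have "\<dots> = r - 1" using card mem fin by simp
    finally show ?thesis using False by simp
  qed
qed

context
  fixes G :: "nat set set" and r N x l
  assumes G: "G \<in> RegGraphs r N" and x: "x < N" and no_cycle: "\<not> short_cycle_near G l x"
begin

lemma is_path_explore_path: "w \<in> tree_verts r \<Longrightarrow> length w \<le> l \<Longrightarrow> is_path G x (explore_path G x w)"
proof (induction w rule: rev_induct)
  case Nil then show ?case by (simp add: is_path_def)
next
  case (snoc a w)
  have w: "w \<in> tree_verts r" and a: "a < (if w = [] then r else r - 1)"
    using snoc.prems by (auto simp: tree_verts_snoc)
  define p where "p = explore_path G x w"
  define y where "y = children G p ! a"
  have pp: "is_path G x p" using snoc w unfolding p_def by auto
  have lenp: "length p = Suc (length w)" by (simp add: p_def)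
  have "a < length (children G p)" using length_children[OF G x pp] a lenp by (cases "w = []") auto
  then have "y \<in> set (children G p)" by (simp add: y_def)
  then have "y \<in> neighbours G (last p)" and not_back: "length p \<noteq> 1 \<Longrightarrow> y \<noteq> p ! (length p - 2)"
    unfolding set_children[OF finite_neighbours[OF G, of "last p"]] by (auto split: if_splits)
  then have edge: "{last p, y} \<in> G" by (simp add: neighbours_def)
  have "y \<notin> set p"
  proof
    assume "y \<in> set p"
    then obtain j where j: "j < length p" "p ! j = y" by (auto simp: in_set_conv_nth)
    define q where "q = take (Suc j) p"
    have qp: "is_path G x q" unfolding q_def by (rule is_path_take[OF pp])
    have lq: "last q = y" using j by (simp add: q_def take_Suc_conv_app_nth)
    have n1: "{last p, y} \<notin> path_edges p"
    proof
      assume "{last p, y} \<in> path_edges p"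
      then have "length p \<ge> 2 \<and> y = p ! (length p - 2)"
        using path_edges_last[of p y] pp by (simp add: is_path_def)
      then show False using not_back by simp
    qed
    then have n2: "{last p, y} \<notin> path_edges q"
      using path_edges_take[of "Suc j" p] by (auto simp: q_def)
    have "length p \<le> Suc l" "length q \<le> Suc l" using lenp snoc.prems(2) by (simp_all add: q_def)
    with pp qp have "short_cycle_near G l x"
      by (rule short_cycle_nearI) (use lq edge n1 n2 in simp_all)
    then show False using no_cycle by contradiction
  qed
  moreover have "p \<noteq> []" by (simp add: p_def)
  ultimately show ?case unfolding explore_path_snoc p_def[symmetric] y_def[symmetric]
    using pp edge path_edges_snoc[of p y] by (auto simp: is_path_def hd_append)
qed

lemma explore_edge:
  assumes "w @ [a] \<in> tree_verts r" "length w < l"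
  shows "{explore G x w, explore G x (w @ [a])} \<in> G"
proof -
  have "is_path G x (explore_path G x (w @ [a]))" using assms by (intro is_path_explore_path) auto
  then show ?thesis using path_edges_snoc[of "explore_path G x w" "explore G x (w @ [a])"]
    by (simp add: is_path_def explore_path_snoc explore_def)
qed

lemma explore_eq_root:
  assumes "w \<in> tree_verts r" "length w \<le> l" "explore G x w = x"
  shows "w = []"
proof (rule ccontr)
  assume "w \<noteq> []"
  then have "length (explore_path G x w) \<ge> 2" by (cases w) auto
  moreover have "distinct (explore_path G x w)"
    using is_path_explore_path[OF assms(1,2)] by (simp add: is_path_def)
  ultimately have "hd (explore_path G x w) \<noteq> last (explore_path G x w)"
    by (intro distinct_hd_neq_last)
  then show False using assms(3) by (simp add: hd_explore_path explore_def)
qed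

lemma explore_parent_eq:
  assumes s: "s \<in> tree_verts r" "length s \<le> l" "s \<noteq> []"
    and t: "t \<in> tree_verts r" "length t \<le> l" "t \<noteq> []"
    and eq: "explore G x s = explore G x t"
  shows "explore G x (butlast s) = explore G x (butlast t)"
proof (rule ccontr)
  assume ne: "explore G x (butlast s) \<noteq> explore G x (butlast t)"
  define p where "p = explore_path G x (butlast s)"
  define q where "q = explore_path G x t"
  have ps: "is_path G x (explore_path G x s)" using is_path_explore_path s by simp
  have pp: "is_path G x p" using is_path_explore_path tree_verts_butlast s by (simp add: p_def)
  have pq: "is_path G x q" using is_path_explore_path t by (simp add: q_def)
  have s_split: "explore_path G x s = p @ [explore G x s]"
    using explore_path_butlast[OF s(3)] by (simp add: p_def)
  have lp: "last p = explore G x (butlast s)" by (simp add: p_def explore_def)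
  have lq: "last q = explore G x s" using eq by (simp add: q_def explore_def)
  have edge: "{last p, last q} \<in> G"
    using ps path_edges_snoc[of p "explore G x s"] lq unfolding s_split by (simp add: is_path_def p_def)
  have "explore G x s \<notin> set p" using ps unfolding s_split is_path_def by auto
  then have n1: "{last p, last q} \<notin> path_edges p"
    using path_edges_subset_set[of "{last p, last q}" p] lq by auto
  have n2: "{last p, last q} \<notin> path_edges q"
  proof
    assume "{last p, last q} \<in> path_edges q"
    then have "{last q, last p} \<in> path_edges q" by (simp add: insert_commute)
    then have "last p = q ! (length q - 2)" using path_edges_last[of q "last p"] pq by (simp add: is_path_def)
    also have "\<dots> = explore G x (butlast t)"
      using explore_path_penultimate[OF t(3)] by (simp add: q_def)
    finally show False using ne lp by simp
  qed
  have "length p \<le> Suc l" "length q \<le> Suc l" using s t by (simp_all add: p_def q_def)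
  with pp pq have "short_cycle_near G l x"
    by (rule short_cycle_nearI) (use edge n1 n2 in simp_all)
  then show False using no_cycle by contradiction
qed

lemma explore_inj:
  "s \<in> tree_verts r \<Longrightarrow> length s \<le> l \<Longrightarrow> t \<in> tree_verts r \<Longrightarrow> length t \<le> l
    \<Longrightarrow> explore G x s = explore G x t \<Longrightarrow> s = t"
proof (induction s arbitrary: t rule: rev_induct)
  case Nil
  then show ?case using explore_eq_root[of t] by simp
next
  case (snoc a s)
  have "t \<noteq> []" using explore_eq_root[of "s @ [a]"] snoc.prems by auto
  then obtain t' b where t: "t = t' @ [b]" by (cases t rule: rev_cases) auto
  have s: "s \<in> tree_verts r" "a < (if s = [] then r else r - 1)"
    and t': "t' \<in> tree_verts r" "b < (if t' = [] then r else r - 1)"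
    using snoc.prems t by (simp_all add: tree_verts_snoc)
  have "explore G x s = explore G x t'"
    using explore_parent_eq[of "s @ [a]" t] snoc.prems t by simp
  then have st: "s = t'" using snoc.IH s(1) t'(1) snoc.prems t by simp
  let ?p = "explore_path G x s"
  have "is_path G x ?p" using is_path_explore_path s snoc.prems by simp
  then have "a < length (children G ?p)" "b < length (children G ?p)"
    using length_children[OF G x] s t' st by (simp_all split: if_splits)
  moreover have "children G ?p ! a = children G ?p ! b"
    using snoc.prems(5) by (simp add: t st explore_snoc)
  ultimately have "a = b" using distinct_children by (simp add: nth_eq_iff_index_eq)
  then show ?case using t st by simp
qed

lemma explore_in_ball:
  "w \<in> tree_verts r \<Longrightarrow> length w \<le> l \<Longrightarrow> explore G x w \<in> ball_set G (length w) x"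
proof (induction w rule: rev_induct)
  case Nil then show ?case by simp
next
  case (snoc a w)
  then have "explore G x w \<in> ball_set G (length w) x" by (simp add: tree_verts_snoc)
  moreover have "{explore G x w, explore G x (w @ [a])} \<in> G"
    using snoc.prems by (intro explore_edge) auto
  ultimately show ?case by auto
qed

lemma ball_subset_explore:
  "k \<le> l \<Longrightarrow> y \<in> ball_set G k x \<Longrightarrow> \<exists>w\<in>tree_verts r. length w \<le> k \<and> explore G x w = y"
proof (induction k arbitrary: y)
  case 0 then show ?case using tree_verts_Nil by auto
next
  case (Suc k)
  from Suc.prems(2) consider "y \<in> ball_set G k x" | z where "z \<in> ball_set G k x" "{z, y} \<in> G"
    by auto
  then show ?case
  proof cases
    case 1
    then obtain w where "w \<in> tree_verts r" "length w \<le> k" "explore G x w = y"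
      using Suc.IH[of y] Suc.prems(1) by auto
    then show ?thesis by (intro bexI[of _ w]) auto
  next
    case 2
    then obtain w where w: "w \<in> tree_verts r" "length w \<le> k" "explore G x w = z"
      using Suc.IH[of z] Suc.prems(1) by auto
    define p where "p = explore_path G x w"
    have pp: "is_path G x p" using is_path_explore_path w Suc.prems unfolding p_def by simp
    have lenp: "length p = Suc (length w)" by (simp add: p_def)
    show ?thesis
    proof (cases "w \<noteq> [] \<and> y = p ! (length p - 2)")
      case True
      then have "y = explore G x (butlast w)"
        using explore_path_penultimate[of w G x] by (simp add: p_def)
      then show ?thesis using w tree_verts_butlast by (intro bexI[of _ "butlast w"]) auto
    next
      case False
      have "y \<in> neighbours G (last p)" using 2 w by (simp add: neighbours_def p_def explore_def)
      then have "y \<in> set (children G p)"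
        unfolding set_children[OF finite_neighbours[OF G, of "last p"]] using False lenp by auto
      then obtain a where a: "a < length (children G p)" "children G p ! a = y"
        by (auto simp: in_set_conv_nth)
      have "w @ [a] \<in> tree_verts r"
        unfolding tree_verts_snoc using w a length_children[OF G x pp] lenp by simp
      moreover have "explore G x (w @ [a]) = y" using a by (simp add: explore_snoc p_def)
      ultimately show ?thesis using w by (intro bexI[of _ "w @ [a]"]) auto
    qed
  qed
qed

lemma explore_image: "explore G x ` {w \<in> tree_verts r. length w \<le> l} = ball_set G l x"
proof
  show "explore G x ` {w \<in> tree_verts r. length w \<le> l} \<subseteq> ball_set G l x"
  proof clarify
    fix w assume w: "w \<in> tree_verts r" "length w \<le> l"
    then have "explore G x w \<in> ball_set G (length w) x" by (rule explore_in_ball)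
    then show "explore G x w \<in> ball_set G l x" by (rule subsetD[OF ball_set_mono[OF w(2)]])
  qed
  show "ball_set G l x \<subseteq> explore G x ` {w \<in> tree_verts r. length w \<le> l}"
  proof
    fix y assume "y \<in> ball_set G l x"
    then obtain w where "w \<in> tree_verts r" "length w \<le> l" "explore G x w = y"
      using ball_subset_explore[of l y] by auto
    then show "y \<in> explore G x ` {w \<in> tree_verts r. length w \<le> l}" by auto
  qed
qed

lemma explore_path_edge_tree_edge:
  assumes u: "u \<in> tree_verts r" "length u \<le> l" and v: "v \<in> tree_verts r" "length v \<le> l"
    and e: "{explore G x u, explore G x v} \<in> path_edges (explore_path G x u)"
  shows "{u, v} \<in> tree_edges r"
proof -
  have "distinct (explore_path G x u)" using is_path_explore_path u by (simp add: is_path_def)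
  then have "length (explore_path G x u) \<ge> 2
      \<and> explore G x v = explore_path G x u ! (length (explore_path G x u) - 2)"
    using path_edges_last[of "explore_path G x u" "explore G x v"] e by (simp add: explore_def)
  then have une: "u \<noteq> []" and "explore G x v = explore_path G x u ! (length u - 1)" by auto
  then have "explore G x v = explore G x (butlast u)" using explore_path_penultimate[OF une] by simp
  then have "v = butlast u"
    using u(2) by (intro explore_inj[OF v tree_verts_butlast[OF u(1)]]) simp_all
  then obtain a where "u = v @ [a]" using une by (metis append_butlast_last_id)
  then show ?thesis unfolding tree_edges_iff using u(1) by simp
qed

lemma explore_edge_iff:
  assumes s: "s \<in> tree_verts r" "length s \<le> l" and t: "t \<in> tree_verts r" "length t \<le> l"
  shows "{explore G x s, explore G x t} \<in> G \<longleftrightarrow> {s, t} \<in> tree_edges r"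
proof
  assume "{s, t} \<in> tree_edges r"
  then consider a where "t = s @ [a]" "t \<in> tree_verts r" | a where "s = t @ [a]" "s \<in> tree_verts r"
    unfolding tree_edges_iff by blast
  then show "{explore G x s, explore G x t} \<in> G"
  proof cases
    case 1 then show ?thesis using explore_edge[of s a] t by auto
  next
    case 2 then show ?thesis using explore_edge[of t a] s by (auto simp: insert_commute)
  qed
next
  assume e: "{explore G x s, explore G x t} \<in> G"
  show "{s, t} \<in> tree_edges r"
  proof (rule ccontr)
    assume nte: "{s, t} \<notin> tree_edges r"
    let ?p = "explore_path G x s" and ?q = "explore_path G x t"
    have "{explore G x s, explore G x t} \<notin> path_edges ?p"
      using explore_path_edge_tree_edge[OF s t] nte by blast
    moreover have "{explore G x s, explore G x t} \<notin> path_edges ?q"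
      using explore_path_edge_tree_edge[OF t s] nte by (auto simp: insert_commute)
    moreover have "is_path G x ?p" "is_path G x ?q" "length ?p \<le> Suc l" "length ?q \<le> Suc l"
      using is_path_explore_path s t by simp_all
    ultimately have "short_cycle_near G l x"
      using e short_cycle_nearI[of G x ?p ?q l] by (simp add: explore_def)
    then show False using no_cycle by contradiction
  qed
qed

lemma good_if_no_short_cycle: "good r l G x"
proof -
  define TB where "TB = {w \<in> tree_verts r. length w \<le> l}"
  have inj: "inj_on (explore G x) TB"
  proof (rule inj_onI)
    fix s t assume "s \<in> TB" "t \<in> TB" "explore G x s = explore G x t"
    then show "s = t" by (intro explore_inj) (simp_all add: TB_def)
  qed
  then have bij: "bij_betw (explore G x) TB (ball_set G l x)"
    using explore_image by (simp add: bij_betw_def TB_def)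
  define f where "f = inv_into TB (explore G x)"
  have bf: "bij_betw f (ball_set G l x) TB" unfolding f_def by (rule bij_betw_inv_into[OF bij])
  have "f x = []" unfolding f_def using inv_into_f_f[OF inj, of "[]"] tree_verts_Nil by (simp add: TB_def)
  moreover have "{u, v} \<in> G \<longleftrightarrow> {f u, f v} \<in> tree_edges r"
    if "u \<in> ball_set G l x" "v \<in> ball_set G l x" for u v
  proof -
    have "f u \<in> TB" "explore G x (f u) = u" "f v \<in> TB" "explore G x (f v) = v"
      using that bij bf unfolding f_def by (auto simp: bij_betw_def f_inv_into_f inv_into_into)
    then show ?thesis using explore_edge_iff[of "f u" "f v"] by (auto simp: TB_def)
  qed
  ultimately show ?thesis using bf unfolding good_def rooted_iso_def ball_set_tree
    by (intro exI[of _ f]) (simp add: TB_def)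
qed

end

section \<open>Counting paths and configurations\<close>

definition paths_of_length :: "'a set set \<Rightarrow> 'a \<Rightarrow> nat \<Rightarrow> 'a list set" where
  "paths_of_length G x k = {p. is_path G x p \<and> length p = Suc k}"

definition paths_within :: "'a set set \<Rightarrow> 'a \<Rightarrow> nat \<Rightarrow> 'a list set" where
  "paths_within G x l = {p. is_path G x p \<and> length p \<le> Suc l}"

lemma finite_paths_within:
  assumes G: "G \<in> RegGraphs r N" and x: "x < N"
  shows "finite (paths_within G x l)"
proof (rule finite_subset)
  show "paths_within G x l \<subseteq> {p. set p \<subseteq> {..<N} \<and> length p \<le> Suc l}"
    using is_path_lessThan[OF G x] by (auto simp: paths_within_def)
qed (rule finite_lists_length_le, simp)

lemma finite_paths_of_length:
  assumes G: "G \<in> RegGraphs r N" and x: "x < N"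
  shows "finite (paths_of_length G x k)"
  by (rule finite_subset[OF _ finite_paths_within[OF G x, of k]])
    (auto simp: paths_of_length_def paths_within_def)

lemma card_paths_of_length_0: "card (paths_of_length G x 0) \<le> 1"
proof -
  have "paths_of_length G x 0 \<subseteq> {[x]}"
    by (auto simp: paths_of_length_def is_path_def length_Suc_conv)
  then show ?thesis using card_mono[of "{[x]}"] by fastforce
qed

lemma card_paths_of_length_Suc:
  assumes G: "G \<in> RegGraphs r N" and x: "x < N"
  shows "card (paths_of_length G x (Suc k)) \<le> card (paths_of_length G x k) * (if k = 0 then r else r - 1)"
proof -
  let ?ext = "Sigma (paths_of_length G x k) (\<lambda>p. set (children G p))"
  have sub: "paths_of_length G x (Suc k) \<subseteq> (\<lambda>(p, y). p @ [y]) ` ?ext"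
  proof
    fix q assume q: "q \<in> paths_of_length G x (Suc k)"
    then have "length q = Suc (Suc k)" by (simp add: paths_of_length_def)
    then obtain p y where qp: "q = p @ [y]" by (cases q rule: rev_cases) auto
    have lp: "length p = Suc k" using q qp by (simp add: paths_of_length_def)
    then have pne: "p \<noteq> []" by auto
    have "is_path G x (p @ [y])" using q qp by (simp add: paths_of_length_def)
    note p = is_path_snocD[OF this pne]
    have "length p \<noteq> 1 \<Longrightarrow> p ! (length p - 2) \<in> set p" using lp by simp
    then have "y \<in> set (children G p)"
      unfolding set_children[OF finite_neighbours[OF G, of "last p"]] using p(2,3) by auto
    then have "(p, y) \<in> ?ext" using p(1) lp by (simp add: paths_of_length_def)
    then show "q \<in> (\<lambda>(p, y). p @ [y]) ` ?ext" using qp by force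
  qed
  have fin: "finite ?ext" using finite_paths_of_length[OF G x] by auto
  have "card (paths_of_length G x (Suc k)) \<le> card ?ext"
    using card_mono[OF finite_imageI[OF fin] sub] card_image_le[OF fin, of "\<lambda>(p, y). p @ [y]"]
    by linarith
  also have "\<dots> = (\<Sum>p\<in>paths_of_length G x k. card (set (children G p)))"
    using finite_paths_of_length[OF G x] by simp
  also have "\<dots> = (\<Sum>p\<in>paths_of_length G x k. (if k = 0 then r else r - 1))"
  proof (rule sum.cong)
    fix p assume "p \<in> paths_of_length G x k"
    then have "is_path G x p" "length p = Suc k" by (auto simp: paths_of_length_def)
    then show "card (set (children G p)) = (if k = 0 then r else r - 1)"
      using distinct_card[OF distinct_children] length_children[OF G x] by simp
  qed simp
  finally show ?thesis by simp
qed

lemma card_paths_of_length_le: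
  assumes G: "G \<in> RegGraphs r N" and x: "x < N"
  shows "card (paths_of_length G x (Suc k)) \<le> r * (r - 1) ^ k"
proof (induction k)
  case 0
  show ?case using card_paths_of_length_Suc[OF G x, of 0] card_paths_of_length_0[of G x]
    by (simp add: le_trans)
next
  case (Suc k)
  have "card (paths_of_length G x (Suc (Suc k))) \<le> card (paths_of_length G x (Suc k)) * (r - 1)"
    using card_paths_of_length_Suc[OF G x, of "Suc k"] by simp
  also have "\<dots> \<le> r * (r - 1) ^ k * (r - 1)" using Suc by simp
  finally show ?case by (simp add: ac_simps)
qed

text \<open>The geometric bound 1 + r + r (r - 1) + ... + r (r - 1)^(l - 1) <= r (r - 1)^l / (r - 2),
  multiplied out.\<close>

lemma card_paths_within_le:
  assumes G: "G \<in> RegGraphs r N" and x: "x < N"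
  shows "(r - 2) * card (paths_within G x l) \<le> r * (r - 1) ^ l"
proof (cases "r < 2")
  case False
  show ?thesis
  proof (induction l)
    case 0
    have "paths_within G x 0 = paths_of_length G x 0"
      by (auto simp: paths_within_def paths_of_length_def is_path_def le_Suc_eq)
    then have "(r - 2) * card (paths_within G x 0) \<le> (r - 2) * 1"
      using card_paths_of_length_0[of G x] by (intro mult_le_mono2) simp
    also have "\<dots> \<le> r * (r - 1) ^ 0" by simp
    finally show ?case .
  next
    case (Suc l)
    let ?m = "r * (r - 1) ^ l"
    have split: "paths_within G x (Suc l) = paths_within G x l \<union> paths_of_length G x (Suc l)"
      by (auto simp: paths_within_def paths_of_length_def)
    have "card (paths_within G x (Suc l)) \<le> card (paths_within G x l) + ?m"
      unfolding split using card_Un_le[of "paths_within G x l" "paths_of_length G x (Suc l)"]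
        card_paths_of_length_le[OF G x, of l] by linarith
    then have "(r - 2) * card (paths_within G x (Suc l)) \<le> (r - 2) * card (paths_within G x l) + (r - 2) * ?m"
      by (metis add_mult_distrib2 mult_le_mono2)
    also have "\<dots> \<le> ?m + (r - 2) * ?m" using Suc by simp
    also have "\<dots> = r * (r - 1) ^ Suc l" using False by (simp add: algebra_simps)
    finally show ?case .
  qed
qed simp

definition potential_paths :: "nat \<Rightarrow> nat \<Rightarrow> nat \<Rightarrow> nat list set" where
  "potential_paths N l x = {p. p \<noteq> [] \<and> hd p = x \<and> distinct p \<and> set p \<subseteq> {..<N} \<and> length p \<le> Suc l}"

definition config_edges :: "'a list \<times> 'a list \<Rightarrow> 'a set set" where
  "config_edges w = path_edges (fst w) \<union> path_edges (snd w)"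

definition closing_edge :: "'a list \<times> 'a list \<Rightarrow> 'a set" where
  "closing_edge w = {last (fst w), last (snd w)}"

definition cycle_configs :: "nat \<Rightarrow> nat \<Rightarrow> nat \<Rightarrow> (nat list \<times> nat list) set" where
  "cycle_configs N l x = {w \<in> potential_paths N l x \<times> potential_paths N l x.
      card (closing_edge w) = 2 \<and> closing_edge w \<notin> config_edges w}"

lemma finite_cycle_configs: "finite (cycle_configs N l x)"
proof -
  have "finite (potential_paths N l x)"
    by (rule finite_subset[OF _ finite_lists_length_le[of "{..<N}" "Suc l"]])
      (auto simp: potential_paths_def)
  then show ?thesis by (simp add: cycle_configs_def)
qed

lemma card_bad_le_configs:
  assumes G: "G \<in> RegGraphs r N"
  shows "card (bad r N l G)
    \<le> (\<Sum>x<N. card {w\<in>cycle_configs N l x. config_edges w \<subseteq> G \<and> closing_edge w \<in> G})"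
proof -
  have "bad r N l G \<subseteq> {x\<in>{..<N}. short_cycle_near G l x}"
    using good_if_no_short_cycle[OF G] by (auto simp: bad_def)
  then have "card (bad r N l G) \<le> card {x\<in>{..<N}. short_cycle_near G l x}"
    by (rule card_mono[rotated]) simp
  also have "\<dots> = (\<Sum>x<N. if short_cycle_near G l x then 1 else 0)"
    by (simp add: sum.If_cases Int_def)
  also have "\<dots> \<le> (\<Sum>x<N. card {w\<in>cycle_configs N l x. config_edges w \<subseteq> G \<and> closing_edge w \<in> G})"
  proof (rule sum_mono)
    fix x assume x: "x \<in> {..<N}"
    show "(if short_cycle_near G l x then 1 else 0)
      \<le> card {w\<in>cycle_configs N l x. config_edges w \<subseteq> G \<and> closing_edge w \<in> G}"
    proof (cases "short_cycle_near G l x")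
      case True
      then obtain p q where "is_path G x p \<and> is_path G x q \<and> length p \<le> Suc l \<and> length q \<le> Suc l
        \<and> {last p, last q} \<in> G \<and> {last p, last q} \<notin> path_edges p \<union> path_edges q"
        unfolding short_cycle_near_def by blast
      then have pq: "is_path G x p" "is_path G x q" "length p \<le> Suc l" "length q \<le> Suc l"
        "{last p, last q} \<in> G" "{last p, last q} \<notin> path_edges p \<union> path_edges q"
        by simp_all
      have "set p \<subseteq> {..<N}" "set q \<subseteq> {..<N}" using is_path_lessThan[OF G] x pq by auto
      moreover have "card {last p, last q} = 2" using RegGraphs_edge[OF G pq(5)] by simp
      ultimately have "(p, q) \<in> {w\<in>cycle_configs N l x. config_edges w \<subseteq> G \<and> closing_edge w \<in> G}"
        using pq by (auto simp: cycle_configs_def potential_paths_def config_edges_def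
            closing_edge_def is_path_def)
      moreover have "finite {w\<in>cycle_configs N l x. config_edges w \<subseteq> G \<and> closing_edge w \<in> G}"
        by (simp add: finite_cycle_configs)
      ultimately have "card {w\<in>cycle_configs N l x. config_edges w \<subseteq> G \<and> closing_edge w \<in> G} \<noteq> 0"
        by auto
      then show ?thesis by simp
    qed simp
  qed
  finally show ?thesis .
qed

lemma card_closed_config_le:
  assumes w: "w \<in> cycle_configs N l x" and r: "0 < r"
    and slack: "2 * (8 * l + 4 * r + 2 * r^2) \<le> r * N"
  shows "N * card {G\<in>RegGraphs r N. config_edges w \<subseteq> G \<and> closing_edge w \<in> G}
    \<le> 2 * r * card {G\<in>RegGraphs r N. config_edges w \<subseteq> G}"
proof -
  obtain p q where w_pq: "w = (p, q)" by (cases w)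
  let ?T = "config_edges w" and ?A = "card {G\<in>RegGraphs r N. config_edges w \<subseteq> G \<and> closing_edge w \<in> G}"
    and ?B = "card {G\<in>RegGraphs r N. config_edges w \<subseteq> G}"
  have pq: "p \<in> potential_paths N l x" "q \<in> potential_paths N l x"
    "card {last p, last q} = 2" "{last p, last q} \<notin> ?T"
    using w by (auto simp: cycle_configs_def w_pq closing_edge_def)
  have uv: "last p \<noteq> last q" using pq(3) by (cases "last p = last q") simp_all
  have T: "finite ?T" "\<forall>t\<in>?T. card t = 2"
    using pq card_path_edge by (auto simp: config_edges_def w_pq finite_path_edges potential_paths_def)
  have "card ?T \<le> card (path_edges p) + card (path_edges q)"
    unfolding config_edges_def w_pq by (simp add: card_Un_le)
  also have "\<dots> \<le> 2 * l"
    using card_path_edges_le[of p] card_path_edges_le[of q] pq by (auto simp: potential_paths_def)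
  finally have "2 * (4 * card ?T + 4 * r + 2 * r^2) \<le> r * N"
    using slack by (simp only: distrib_left)
  then have "r * N \<le> 2 * (r * N - (4 * card ?T + 4 * r + 2 * r^2))" by arith
  then have "?A * (r * N) \<le> ?A * (2 * (r * N - (4 * card ?T + 4 * r + 2 * r^2)))"
    by (rule mult_le_mono2)
  also have "\<dots> = 2 * (?A * (r * N - (4 * card ?T + 4 * r + 2 * r^2)))" by simp
  also have "\<dots> \<le> 2 * (r^2 * ?B)"
    using switching_count[OF T uv pq(4), of r N] by (simp add: closing_edge_def w_pq)
  finally have "r * (N * ?A) \<le> r * (2 * r * ?B)" by (simp add: power2_eq_square ac_simps)
  then show ?thesis using r by simp
qed

lemma card_configs_in_graph_le:
  assumes G: "G \<in> RegGraphs r N" and x: "x < N"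
  shows "(r - 2)^2 * card {w\<in>cycle_configs N l x. config_edges w \<subseteq> G} \<le> (r * (r - 1) ^ l)^2"
proof -
  have "{w\<in>cycle_configs N l x. config_edges w \<subseteq> G} \<subseteq> paths_within G x l \<times> paths_within G x l"
    by (auto simp: cycle_configs_def potential_paths_def config_edges_def paths_within_def is_path_def)
  then have "card {w\<in>cycle_configs N l x. config_edges w \<subseteq> G} \<le> card (paths_within G x l \<times> paths_within G x l)"
    by (rule card_mono[rotated]) (simp add: finite_paths_within[OF G x])
  then have "card {w\<in>cycle_configs N l x. config_edges w \<subseteq> G} \<le> (card (paths_within G x l))^2"
    by (simp add: power2_eq_square card_cartesian_product)
  then have "(r - 2)^2 * card {w\<in>cycle_configs N l x. config_edges w \<subseteq> G}
      \<le> ((r - 2) * card (paths_within G x l))^2"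
    by (simp add: power_mult_distrib)
  also have "\<dots> \<le> (r * (r - 1) ^ l)^2"
    by (rule power_mono[OF card_paths_within_le[OF G x]]) simp
  finally show ?thesis .
qed

lemma sum_card_bad_le_configs_in_graph:
  assumes r: "0 < r" and slack: "2 * (8 * l + 4 * r + 2 * r^2) \<le> r * N"
  shows "N * (\<Sum>G\<in>RegGraphs r N. card (bad r N l G))
    \<le> 2 * r * (\<Sum>x<N. \<Sum>G\<in>RegGraphs r N. card {w\<in>cycle_configs N l x. config_edges w \<subseteq> G})"
proof -
  let ?S = "RegGraphs r N" and ?C = "cycle_configs N l"
  let ?paths = "\<lambda>G w. config_edges w \<subseteq> G"
  let ?closed = "\<lambda>G w. config_edges w \<subseteq> G \<and> closing_edge w \<in> G"
  have finS: "finite ?S" by (rule finite_RegGraphs)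
  have "N * (\<Sum>G\<in>?S. card (bad r N l G)) \<le> N * (\<Sum>G\<in>?S. \<Sum>x<N. card {w\<in>?C x. ?closed G w})"
    by (intro mult_le_mono2 sum_mono card_bad_le_configs) simp
  also have "\<dots> = N * (\<Sum>x<N. \<Sum>G\<in>?S. card {w\<in>?C x. ?closed G w})"
    by (simp only: sum.swap[of _ ?S "{..<N}"])
  also have "\<dots> = N * (\<Sum>x<N. \<Sum>w\<in>?C x. card {G\<in>?S. ?closed G w})"
    by (simp only: sum_card_filter_swap[OF finS finite_cycle_configs])
  also have "\<dots> = (\<Sum>x<N. \<Sum>w\<in>?C x. N * card {G\<in>?S. ?closed G w})"
    by (simp only: sum_distrib_left)
  also have "\<dots> \<le> (\<Sum>x<N. \<Sum>w\<in>?C x. 2 * r * card {G\<in>?S. ?paths G w})"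
    by (intro sum_mono card_closed_config_le[OF _ r slack]) simp
  also have "\<dots> = 2 * r * (\<Sum>x<N. \<Sum>w\<in>?C x. card {G\<in>?S. ?paths G w})"
    by (simp only: sum_distrib_left)
  also have "\<dots> = 2 * r * (\<Sum>x<N. \<Sum>G\<in>?S. card {w\<in>?C x. ?paths G w})"
    by (simp only: sum_card_filter_swap[OF finS finite_cycle_configs])
  finally show ?thesis .
qed

lemma sum_card_bad_le_path_count:
  assumes r: "0 < r" and N: "0 < N" and slack: "2 * (8 * l + 4 * r + 2 * r^2) \<le> r * N"
  shows "(r - 2)^2 * (\<Sum>G\<in>RegGraphs r N. card (bad r N l G))
    \<le> 2 * r * card (RegGraphs r N) * (r * (r - 1) ^ l)^2"
proof -
  let ?S = "RegGraphs r N"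
  let ?configs = "\<Sum>x<N. \<Sum>G\<in>?S. card {w\<in>cycle_configs N l x. config_edges w \<subseteq> G}"
  have "(r - 2)^2 * ?configs
      = (\<Sum>x<N. \<Sum>G\<in>?S. (r - 2)^2 * card {w\<in>cycle_configs N l x. config_edges w \<subseteq> G})"
    by (simp add: sum_distrib_left)
  also have "\<dots> \<le> (\<Sum>x<N. \<Sum>G\<in>?S. (r * (r - 1) ^ l)^2)"
    by (intro sum_mono card_configs_in_graph_le) simp_all
  finally have paths: "(r - 2)^2 * ?configs \<le> N * (card ?S * (r * (r - 1) ^ l)^2)" by simp
  have "N * ((r - 2)^2 * (\<Sum>G\<in>?S. card (bad r N l G))) \<le> (r - 2)^2 * (2 * r * ?configs)"
    using mult_le_mono2[OF sum_card_bad_le_configs_in_graph[OF r slack], of "(r - 2)^2"]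
    by (simp add: ac_simps)
  also have "\<dots> \<le> 2 * r * (N * (card ?S * (r * (r - 1) ^ l)^2))"
    using mult_le_mono2[OF paths, of "2 * r"] by (simp add: ac_simps)
  finally show ?thesis using N by (simp add: ac_simps)
qed

section \<open>The expected number of bad vertices\<close>

text \<open>Since (r - 1)^l < 5 N, l is logarithmic in N; from N >= 128 + 16 r + 8 r^2 on this leaves
  the slack required by the switching bound.\<close>

lemma switching_slack:
  assumes r: "3 \<le> r" and exp: "(r - 1) ^ l < 5 * N" and N: "128 + 16 * r + 8 * r^2 \<le> N"
  shows "2 * (8 * l + 4 * r + 2 * r^2) \<le> r * N"
proof -
  have "(2::nat) ^ l \<le> (r - 1) ^ l" using r by (intro power_mono) auto
  then have "32 * l < 5 * N + 128" using linear_le_exp2[of l] exp by linarith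
  moreover have "3 * N \<le> r * N" using r by simp
  ultimately have "16 * l + 8 * r + 4 * r^2 \<le> r * N" using N by linarith
  then show ?thesis by simp
qed

lemma one_le_threshold_scale:
  assumes r: "3 \<le> r"
  shows "1 \<le> real r ^ 2 * real (r - 1) powi (2 * int l - 2)"
proof -
  have a: "1 \<le> real (r - 1)" "real (r - 1) \<le> real r" using r by auto
  have "real (r - 1) ^ 2 \<le> real r ^ 2 * 1" using a by (simp add: power_mono)
  also have "\<dots> \<le> real r ^ 2 * real (r - 1) ^ (2 * l)"
    using a by (intro mult_left_mono one_le_power) simp_all
  finally have "1 \<le> real r ^ 2 * real (r - 1) ^ (2 * l) / real (r - 1) ^ 2"
    using a by (simp add: le_divide_eq)
  then show ?thesis using a by (simp add: powi_double_minus_two)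
qed

lemma power_div_le_threshold_scale:
  assumes r: "3 \<le> r"
  shows "real (r - 1) ^ (2 * l) / real (r - 2) ^ 2 \<le> 4 * real (r - 1) powi (2 * int l - 2)"
proof -
  define a where "a = real (r - 1)"
  define b where "b = real (r - 2)"
  have ab: "0 < b" "0 < a" "a \<le> 2 * b" using r by (auto simp: a_def b_def of_nat_diff)
  then have "a ^ 2 \<le> (2 * b) ^ 2" by (intro power_mono) auto
  then have "a ^ (2 * l) * a ^ 2 \<le> a ^ (2 * l) * (4 * b ^ 2)"
    using ab by (intro mult_left_mono) (simp_all add: power_mult_distrib)
  then have "a ^ (2 * l) / b ^ 2 \<le> 4 * (a ^ (2 * l) / a ^ 2)"
    using ab by (simp add: field_simps)
  then show ?thesis using ab by (simp add: a_def b_def powi_double_minus_two)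
qed

lemma sum_card_bad_le_large:
  assumes r: "3 \<le> r" and N: "128 + 16 * r + 8 * r^2 \<le> N" and exp: "(r - 1) ^ l < 5 * N"
  shows "(\<Sum>G\<in>RegGraphs r N. real (card (bad r N l G)))
    \<le> 8 * real r * (real r ^ 2 * real (r - 1) powi (2 * int l - 2)) * card (RegGraphs r N)"
proof -
  let ?S = "RegGraphs r N"
  define B where "B = (\<Sum>G\<in>?S. real (card (bad r N l G)))"
  have "(r - 2)^2 * (\<Sum>G\<in>?S. card (bad r N l G)) \<le> 2 * r * card ?S * (r * (r - 1) ^ l)^2"
    using r N by (intro sum_card_bad_le_path_count switching_slack[OF r exp N]) simp_all
  then have "real ((r - 2)^2 * (\<Sum>G\<in>?S. card (bad r N l G)))
      \<le> real (2 * r * card ?S * (r * (r - 1) ^ l)^2)"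
    by (simp only: of_nat_le_iff)
  then have "real (r - 2) ^ 2 * B \<le> 2 * real r * card ?S * real r ^ 2 * real (r - 1) ^ (2 * l)"
    by (simp add: B_def power_mult_distrib power_even_eq)
  then have "B \<le> 2 * real r * card ?S * real r ^ 2 * (real (r - 1) ^ (2 * l) / real (r - 2) ^ 2)"
    using r by (simp add: field_simps)
  also have "\<dots> \<le> 2 * real r * card ?S * real r ^ 2 * (4 * real (r - 1) powi (2 * int l - 2))"
    by (intro mult_left_mono power_div_le_threshold_scale[OF r]) simp
  also have "\<dots> = 8 * real r * (real r ^ 2 * real (r - 1) powi (2 * int l - 2)) * card ?S" by simp
  finally show ?thesis by (simp add: B_def)
qed

lemma sum_card_bad_le:
  assumes r: "3 \<le> r" and exp: "0 < N \<Longrightarrow> real (r - 1) ^ l < 5 * real N"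
  shows "(\<Sum>G\<in>RegGraphs r N. real (card (bad r N l G)))
    \<le> max (8 * real r) (real (128 + 16 * r + 8 * r^2))
      * (real r ^ 2 * real (r - 1) powi (2 * int l - 2)) * card (RegGraphs r N)"
proof -
  let ?S = "RegGraphs r N" and ?N0 = "128 + 16 * r + 8 * r^2"
  let ?c = "real r ^ 2 * real (r - 1) powi (2 * int l - 2)"
  have c: "1 \<le> ?c" by (rule one_le_threshold_scale[OF r])
  show ?thesis
  proof (cases "?N0 \<le> N")
    case True
    then have "real ((r - 1) ^ l) < real (5 * N)" using exp by simp
    then have "(r - 1) ^ l < 5 * N" by (simp only: of_nat_less_iff)
    with r True have "(\<Sum>G\<in>?S. real (card (bad r N l G))) \<le> 8 * real r * ?c * card ?S"
      by (rule sum_card_bad_le_large)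
    also have "\<dots> \<le> max (8 * real r) (real ?N0) * ?c * card ?S"
      using c by (intro mult_right_mono) auto
    finally show ?thesis .
  next
    case False
    have "(\<Sum>G\<in>?S. real (card (bad r N l G))) \<le> (\<Sum>G\<in>?S. real N)"
      by (intro sum_mono of_nat_mono card_mono[of "{..<N}", simplified]) (auto simp: bad_def)
    also have "\<dots> = real N * card ?S" by simp
    also have "\<dots> \<le> real ?N0 * card ?S" using False by (intro mult_right_mono of_nat_mono) simp_all
    also have "\<dots> \<le> max (8 * real r) (real ?N0) * ?c * card ?S"
      using c mult_mono[of "real ?N0" "max (8 * real r) (real ?N0)" 1 ?c]
      by (intro mult_right_mono) auto
    finally show ?thesis .
  qed
qed

theorem lemma4p2:
  fixes r :: nat and l :: "nat \<Rightarrow> nat"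
  assumes "r \<ge> 3"
    and "\<forall>N. even N \<and> N > 0 \<longrightarrow> real (l N) < log (real (r - 1)) (5 * real N)"
  shows "\<exists>K2::real. \<forall>N (z::real). even N \<and> RegGraphs r N \<noteq> {} \<and> z > 0 \<longrightarrow>
           measure_pmf.prob (pmf_of_set (RegGraphs r N))
             {E. real (card (bad r N (l N) E))
                   \<ge> real r ^ 2 * real (r - 1) powi (2 * int (l N) - 2) * z}
           \<le> K2 / z"
proof (intro exI allI impI)
  fix N and z :: real
  assume N: "even N \<and> RegGraphs r N \<noteq> {} \<and> z > 0"
  let ?K = "max (8 * real r) (real (128 + 16 * r + 8 * r^2))"
  let ?c = "real r ^ 2 * real (r - 1) powi (2 * int (l N) - 2)"
  have "real (r - 1) ^ l N < 5 * real N" if "0 < N"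
    using assms that N by (intro power_less_of_less_log) auto
  then have sum: "(\<Sum>G\<in>RegGraphs r N. real (card (bad r N (l N) G))) \<le> ?K * ?c * card (RegGraphs r N)"
    by (rule sum_card_bad_le[OF assms(1)])
  have cz: "0 < ?c * z" using one_le_threshold_scale[OF assms(1), of "l N"] N by simp
  have "measure_pmf.prob (pmf_of_set (RegGraphs r N)) {E. ?c * z \<le> real (card (bad r N (l N) E))}
      \<le> (\<Sum>G\<in>RegGraphs r N. real (card (bad r N (l N) G))) / (?c * z * card (RegGraphs r N))"
    using N cz by (intro pmf_of_set_Markov_inequality) (simp_all add: finite_RegGraphs)
  also have "\<dots> \<le> ?K * ?c * card (RegGraphs r N) / (?c * z * card (RegGraphs r N))"
    by (rule divide_right_mono[OF sum]) (use cz in simp)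
  also have "\<dots> = ?K / z"
    using cz N finite_RegGraphs[of r N] assms(1) by (simp add: card_gt_0_iff)
  finally show "measure_pmf.prob (pmf_of_set (RegGraphs r N))
      {E. real (card (bad r N (l N) E)) \<ge> ?c * z} \<le> ?K / z" .
qed

end
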